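(* There is a unique $\Re$-module homomorphism $\Phi\colon\Re/I_\nu(a,b,c)\to M_\nu(a,b,c)$ sending $1+I_\nu(a,b,c)$ to $m_0$, and $\Phi$ is an isomorphism.
   Context: $\mathbb F$ is algebraically closed with $\operatorname{char}\mathbb F\ne2$. The Racah algebra $\Re$ is the unital associative $\mathbb F$-algebra with generators $A,B,C,D$ and relations $[A,B]=[B,C]=[C,A]=2D$ together with the requirement that each of $\alpha:=[A,D]+AC-BA$, $\beta:=[B,D]+BA-CB$, $\gamma:=[C,D]+CB-AC$ is central in $\Re$; $\delta:=A+B+C$. For $a,b,c,\nu\in\mathbb F$ and $i\in\mathbb Z$: $\theta_i=(a+\tfrac\nu2-i)(a+\tfrac\nu2-i+1)$, $\theta_i^*=(b+\tfrac\nu2-i)(b+\tfrac\nu2-i+1)$, $\varphi_i=i(i-\nu-1)(a+b+c+\tfrac\nu2-i+2)(a+b-c+\tfrac\nu2-i+1)$, $\zeta=(c-b)(c+b+1)(a-\tfrac\nu2)(a+\tfrac\nu2+1)$, $\zeta^*=(a-c)(a+c+1)(b-\tfrac\nu2)(b+\tfrac\nu2+1)$, $\eta=\tfrac\nu2(\tfrac\nu2+1)+a(a+1)+b(b+1)+c(c+1)$. $I_\nu(a,b,c)$ is the left ideal of $\Re$ generated by $B-\theta_0^*$, $(B-\theta_1^* )(A-\theta_0)-\varphi_1$, $\alpha-\zeta$, $\beta-\zeta^*$, $\delta-\eta$. $M_\nu(a,b,c)$ is the $\Re$-module with $\mathbb F$-basis $\{m_i\}_{i\ge0}$ such that $Am_i=\theta_im_i+m_{i+1}$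 ($i\ge0$), $Bm_0=\theta_0^*m_0$, $Bm_i=\theta_i^*m_i+\varphi_im_{i-1}$ ($i\ge1$), and $\alpha,\beta,\delta$ act as $\zeta,\zeta^*,\eta$. *)

theory Defs
  imports "HOL-Library.Function_Algebras" "HOL-Computational_Algebra.Polynomial"
begin

datatype gen = GA | GB | GC | GD

text \<open>Noncommutative polynomials: coefficient functions on words; a word
  [g1,...,gk] stands for the monomial g1 g2 ... gk.  The free algebra consists
  of the finitely supported ones.\<close>
type_synonym 'a ncp = "gen list \<Rightarrow> 'a"

definition ncp_mul :: "'a::comm_ring_1 ncp \<Rightarrow> 'a ncp \<Rightarrow> 'a ncp" where
  "ncp_mul p q = (\<lambda>w. \<Sum>i\<le>length w. p (take i w) * q (drop i w))"

definition ncp_const :: "'a::zero \<Rightarrow> 'a ncp" where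
  "ncp_const c = (\<lambda>w. if w = [] then c else 0)"

definition ncp_gen :: "gen \<Rightarrow> 'a::{zero,one} ncp" where
  "ncp_gen g = (\<lambda>w. if w = [g] then 1 else 0)"

definition free_alg :: "'a::zero ncp set" where
  "free_alg = {p. finite {w. p w \<noteq> 0}}"

definition ncp_comm :: "'a::comm_ring_1 ncp \<Rightarrow> 'a ncp \<Rightarrow> 'a ncp" where
  "ncp_comm p q = ncp_mul p q - ncp_mul q p"

abbreviation rA :: "'a::comm_ring_1 ncp" where "rA \<equiv> ncp_gen GA"
abbreviation rB :: "'a::comm_ring_1 ncp" where "rB \<equiv> ncp_gen GB"
abbreviation rC :: "'a::comm_ring_1 ncp" where "rC \<equiv> ncp_gen GC"
abbreviation rD :: "'a::comm_ring_1 ncp" where "rD \<equiv> ncp_gen GD"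

definition alpha_el :: "'a::comm_ring_1 ncp" where
  "alpha_el = ncp_comm rA rD + ncp_mul rA rC - ncp_mul rB rA"
definition beta_el :: "'a::comm_ring_1 ncp" where
  "beta_el = ncp_comm rB rD + ncp_mul rB rA - ncp_mul rC rB"
definition gamma_el :: "'a::comm_ring_1 ncp" where
  "gamma_el = ncp_comm rC rD + ncp_mul rC rB - ncp_mul rA rC"
definition delta_el :: "'a::comm_ring_1 ncp" where
  "delta_el = rA + rB + rC"

text \<open>Defining relations of the Racah algebra (centrality of alpha, beta, gamma
  expressed as commuting with the four generators).\<close>
definition racah_rels :: "'a::comm_ring_1 ncp set" where
  "racah_rels =
     {ncp_comm rA rB - (rD + rD), ncp_comm rB rC - (rD + rD), ncp_comm rC rA - (rD + rD)}
     \<union> {ncp_comm z X | z X. z \<in> {alpha_el, beta_el, gamma_el} \<and> X \<in> {rA, rB, rC, rD}}"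

inductive_set two_sided_ideal :: "'a::comm_ring_1 ncp set \<Rightarrow> 'a ncp set" for S where
  zero: "0 \<in> two_sided_ideal S"
| gen: "s \<in> S \<Longrightarrow> s \<in> two_sided_ideal S"
| add: "x \<in> two_sided_ideal S \<Longrightarrow> y \<in> two_sided_ideal S \<Longrightarrow> x + y \<in> two_sided_ideal S"
| mul: "x \<in> two_sided_ideal S \<Longrightarrow> p \<in> free_alg \<Longrightarrow> q \<in> free_alg \<Longrightarrow>
        ncp_mul p (ncp_mul x q) \<in> two_sided_ideal S"

inductive_set left_ideal :: "'a::comm_ring_1 ncp set \<Rightarrow> 'a ncp set" for S where
  zero: "0 \<in> left_ideal S"
| gen: "s \<in> S \<Longrightarrow> s \<in> left_ideal S"
| add: "x \<in> left_ideal S \<Longrightarrow> y \<in> left_ideal S \<Longrightarrow> x + y \<in> left_ideal S"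
| mul: "x \<in> left_ideal S \<Longrightarrow> p \<in> free_alg \<Longrightarrow> ncp_mul p x \<in> left_ideal S"

text \<open>The Racah algebra is free_alg / racah_ideal.\<close>
definition racah_ideal :: "'a::comm_ring_1 ncp set" where
  "racah_ideal = two_sided_ideal racah_rels"

definition theta :: "'a::field \<Rightarrow> 'a \<Rightarrow> nat \<Rightarrow> 'a" where
  "theta x nu i = (x + nu/2 - of_nat i) * (x + nu/2 - of_nat i + 1)"
  (* theta_i = theta a nu i,  theta*_i = theta b nu i *)

definition phi :: "'a::field \<Rightarrow> 'a \<Rightarrow> 'a \<Rightarrow> 'a \<Rightarrow> nat \<Rightarrow> 'a" where
  "phi a b c nu i = of_nat i * (of_nat i - nu - 1) * (a + b + c + nu/2 - of_nat i + 2)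
                      * (a + b - c + nu/2 - of_nat i + 1)"

definition zeta :: "'a::field \<Rightarrow> 'a \<Rightarrow> 'a \<Rightarrow> 'a \<Rightarrow> 'a" where
  "zeta a b c nu = (c - b) * (c + b + 1) * (a - nu/2) * (a + nu/2 + 1)"

definition zeta_s :: "'a::field \<Rightarrow> 'a \<Rightarrow> 'a \<Rightarrow> 'a \<Rightarrow> 'a" where
  "zeta_s a b c nu = (a - c) * (a + c + 1) * (b - nu/2) * (b + nu/2 + 1)"

definition eta :: "'a::field \<Rightarrow> 'a \<Rightarrow> 'a \<Rightarrow> 'a \<Rightarrow> 'a" where
  "eta a b c nu = nu/2 * (nu/2 + 1) + a * (a + 1) + b * (b + 1) + c * (c + 1)"

definition I_gens :: "'a::field \<Rightarrow> 'a \<Rightarrow> 'a \<Rightarrow> 'a \<Rightarrow> 'a ncp set" where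
  "I_gens a b c nu =
     {rB - ncp_const (theta b nu 0),
      ncp_mul (rB - ncp_const (theta b nu 1)) (rA - ncp_const (theta a nu 0))
        - ncp_const (phi a b c nu 1),
      alpha_el - ncp_const (zeta a b c nu),
      beta_el - ncp_const (zeta_s a b c nu),
      delta_el - ncp_const (eta a b c nu)}"

text \<open>Preimage in the free algebra of the left ideal I_nu(a,b,c) of the Racah
  algebra: the left ideal generated by the Racah relations ideal and lifts of
  the five generators.\<close>
definition I_lift :: "'a::field \<Rightarrow> 'a \<Rightarrow> 'a \<Rightarrow> 'a \<Rightarrow> 'a ncp set" where
  "I_lift a b c nu = left_ideal (racah_ideal \<union> I_gens a b c nu)"

definition rcoset :: "'a::field \<Rightarrow> 'a \<Rightarrow> 'a \<Rightarrow> 'a \<Rightarrow> 'a ncp \<Rightarrow> 'a ncp set" where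
  "rcoset a b c nu x = {x + k | k. k \<in> I_lift a b c nu}"

text \<open>Carrier of Re / I_nu(a,b,c) (as cosets).\<close>
definition rquot :: "'a::field \<Rightarrow> 'a \<Rightarrow> 'a \<Rightarrow> 'a \<Rightarrow> 'a ncp set set" where
  "rquot a b c nu = rcoset a b c nu ` free_alg"

definition qadd :: "'a::field ncp set \<Rightarrow> 'a ncp set \<Rightarrow> 'a ncp set" where
  "qadd X Y = {x + y | x y. x \<in> X \<and> y \<in> Y}"

definition qact :: "'a::field \<Rightarrow> 'a \<Rightarrow> 'a \<Rightarrow> 'a \<Rightarrow> 'a ncp \<Rightarrow> 'a ncp set \<Rightarrow> 'a ncp set" where
  "qact a b c nu r X = {ncp_mul r x + k | x k. x \<in> X \<and> k \<in> I_lift a b c nu}"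

text \<open>Vectors are coefficient sequences w.r.t. the basis m_0, m_1, ...\<close>
definition Mv :: "(nat \<Rightarrow> 'a::zero) set" where
  "Mv = {v. finite {i. v i \<noteq> 0}}"

definition m0 :: "nat \<Rightarrow> 'a::{zero,one}" where
  "m0 = (\<lambda>i. if i = 0 then 1 else 0)"

definition actA :: "'a::field \<Rightarrow> 'a \<Rightarrow> 'a \<Rightarrow> 'a \<Rightarrow> (nat \<Rightarrow> 'a) \<Rightarrow> nat \<Rightarrow> 'a" where
  "actA a b c nu v = (\<lambda>i. theta a nu i * v i + (if i = 0 then 0 else v (i - 1)))"

definition actB :: "'a::field \<Rightarrow> 'a \<Rightarrow> 'a \<Rightarrow> 'a \<Rightarrow> (nat \<Rightarrow> 'a) \<Rightarrow> nat \<Rightarrow> 'a" where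
  "actB a b c nu v = (\<lambda>i. theta b nu i * v i + phi a b c nu (Suc i) * v (Suc i))"

text \<open>C and D are determined: delta = A+B+C acts as eta, and 2D = [A,B].\<close>
definition actC :: "'a::field \<Rightarrow> 'a \<Rightarrow> 'a \<Rightarrow> 'a \<Rightarrow> (nat \<Rightarrow> 'a) \<Rightarrow> nat \<Rightarrow> 'a" where
  "actC a b c nu v = (\<lambda>i. eta a b c nu * v i - actA a b c nu v i - actB a b c nu v i)"

definition actD :: "'a::field \<Rightarrow> 'a \<Rightarrow> 'a \<Rightarrow> 'a \<Rightarrow> (nat \<Rightarrow> 'a) \<Rightarrow> nat \<Rightarrow> 'a" where
  "actD a b c nu v =
     (\<lambda>i. (actA a b c nu (actB a b c nu v) i - actB a b c nu (actA a b c nu v) i) / 2)"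

fun gen_act :: "'a::field \<Rightarrow> 'a \<Rightarrow> 'a \<Rightarrow> 'a \<Rightarrow> gen \<Rightarrow> (nat \<Rightarrow> 'a) \<Rightarrow> nat \<Rightarrow> 'a" where
  "gen_act a b c nu GA = actA a b c nu"
| "gen_act a b c nu GB = actB a b c nu"
| "gen_act a b c nu GC = actC a b c nu"
| "gen_act a b c nu GD = actD a b c nu"

fun word_act :: "'a::field \<Rightarrow> 'a \<Rightarrow> 'a \<Rightarrow> 'a \<Rightarrow> gen list \<Rightarrow> (nat \<Rightarrow> 'a) \<Rightarrow> nat \<Rightarrow> 'a" where
  "word_act a b c nu [] v = v"
| "word_act a b c nu (g # w) v = gen_act a b c nu g (word_act a b c nu w v)"

definition mact :: "'a::field \<Rightarrow> 'a \<Rightarrow> 'a \<Rightarrow> 'a \<Rightarrow> 'a ncp \<Rightarrow> (nat \<Rightarrow> 'a) \<Rightarrow> nat \<Rightarrow> 'a" where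
  "mact a b c nu r v = (\<lambda>i. \<Sum>w\<in>{w. r w \<noteq> 0}. r w * word_act a b c nu w v i)"

definition racah_hom :: "'a::field \<Rightarrow> 'a \<Rightarrow> 'a \<Rightarrow> 'a \<Rightarrow> ('a ncp set \<Rightarrow> nat \<Rightarrow> 'a) \<Rightarrow> bool" where
  "racah_hom a b c nu \<Phi> \<longleftrightarrow>
     (\<forall>X\<in>rquot a b c nu. \<Phi> X \<in> Mv) \<and>
     (\<forall>X\<in>rquot a b c nu. \<forall>Y\<in>rquot a b c nu. \<Phi> (qadd X Y) = (\<lambda>i. \<Phi> X i + \<Phi> Y i)) \<and>
     (\<forall>r\<in>free_alg. \<forall>X\<in>rquot a b c nu. \<Phi> (qact a b c nu r X) = mact a b c nu r (\<Phi> X))"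

end

theory Submission
  imports Defs
begin

text \<open>The map x \<mapsto> x m_0 from the free algebra on A, B, C, D to M is a module map once the
  Racah relations are known to hold on M. There C = \<eta> - A - B and 2D = [A,B] by construction, so
  \<alpha> = \<zeta> and \<beta> = \<zeta>' reduce to two cubic identities in A and B that are checked coefficientwise
  on the basis vectors m_j; \<gamma> then acts as -\<zeta> - \<zeta>'. Every generator of I kills m_0, so the map
  factors through the quotient by I. Conversely, modulo I every element is a combination of the
  products (A - \<theta>_(j-1)) ... (A - \<theta>_0): the relation defining \<alpha>, together with the centrality of
  \<alpha> and \<delta>, moves B to the right through powers of A, where B, \<alpha>, \<delta> act as scalars modulo I.
  These products send m_0 to the basis vectors m_j, which gives bijectivity; uniqueness holds
  because the class of 1 generates the quotient.\<close>

section \<open>The free algebra as a ring\<close>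

definition ncp_strip :: "gen \<Rightarrow> 'a ncp \<Rightarrow> 'a ncp" where
  "ncp_strip g p = (\<lambda>w. p (g # w))"

lemma ncp_mul_Nil: "ncp_mul p q [] = p [] * q []"
  by (simp add: ncp_mul_def)

lemma ncp_mul_Cons: "ncp_mul p q (g # w) = p [] * q (g # w) + ncp_mul (ncp_strip g p) q w"
  unfolding ncp_mul_def ncp_strip_def by (simp only: length_Cons sum.atMost_Suc_shift) simp

lemma ncp_mul_add_left: "ncp_mul (p + q) r = ncp_mul p r + ncp_mul q r"
  by (simp add: ncp_mul_def fun_eq_iff distrib_right sum.distrib)

lemma ncp_mul_add_right: "ncp_mul p (q + r) = ncp_mul p q + ncp_mul p r"
  by (simp add: ncp_mul_def fun_eq_iff distrib_left sum.distrib)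

lemma ncp_mul_scale_left: "ncp_mul (\<lambda>w. c * p w) q = (\<lambda>w. c * ncp_mul p q w)"
  by (simp add: ncp_mul_def fun_eq_iff sum_distrib_left mult.assoc)

lemma ncp_mul_assoc: "ncp_mul (ncp_mul p q) r = ncp_mul p (ncp_mul q r)"
proof (rule ext)
  show "ncp_mul (ncp_mul p q) r w = ncp_mul p (ncp_mul q r) w" for w
  proof (induction w arbitrary: p q r)
    case Nil then show ?case by (simp add: ncp_mul_Nil mult.assoc)
  next
    case (Cons g w)
    have "ncp_strip g (ncp_mul p q) = (\<lambda>u. p [] * ncp_strip g q u) + ncp_mul (ncp_strip g p) q"
      by (simp add: ncp_strip_def ncp_mul_Cons fun_eq_iff)
    then show ?case
      by (simp add: ncp_mul_Cons ncp_mul_Nil ncp_mul_add_left ncp_mul_scale_left Cons.IH algebra_simps)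
  qed
qed

lemma ncp_mul_zero_left: "ncp_mul 0 p = 0"
  by (simp add: ncp_mul_def fun_eq_iff)

lemma ncp_mul_const_left: "ncp_mul (ncp_const c) p = (\<lambda>w. c * p w)"
proof (rule ext)
  have "ncp_strip g (ncp_const c) = 0" for g
    by (simp add: ncp_strip_def ncp_const_def fun_eq_iff)
  then show "ncp_mul (ncp_const c) p w = c * p w" for w
    by (cases w) (simp_all add: ncp_mul_Nil ncp_mul_Cons ncp_mul_zero_left ncp_const_def)
qed

lemma ncp_mul_const_right: "ncp_mul p (ncp_const c) = (\<lambda>w. p w * c)"
proof (rule ext)
  show "ncp_mul p (ncp_const c) w = p w * c" for w
    by (induction w arbitrary: p) (simp_all add: ncp_mul_Nil ncp_mul_Cons ncp_const_def ncp_strip_def)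
qed

definition ncp_word :: "gen list \<Rightarrow> 'a::{zero,one} ncp" where
  "ncp_word u = (\<lambda>w. if w = u then 1 else 0)"

lemma ncp_mul_gen_word: "ncp_mul (ncp_gen g) (ncp_word u) = (ncp_word (g # u) :: 'a::comm_ring_1 ncp)"
proof (rule ext)
  fix w :: "gen list"
  show "ncp_mul (ncp_gen g) (ncp_word u) w = (ncp_word (g # u) w :: 'a)"
  proof (cases w)
    case (Cons g' w')
    have "ncp_strip g' (ncp_gen g) = (ncp_const (if g' = g then 1 else 0) :: 'a ncp)"
      by (auto simp add: ncp_strip_def ncp_gen_def ncp_const_def)
    then show ?thesis
      by (simp add: Cons ncp_mul_Cons ncp_mul_const_left) (simp add: ncp_gen_def ncp_word_def)
  qed (simp add: ncp_mul_Nil ncp_gen_def ncp_word_def)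
qed

lemma free_alg_mul:
  assumes "p \<in> free_alg" "q \<in> free_alg"
  shows "ncp_mul p q \<in> free_alg"
proof -
  let ?S = "(\<lambda>(u, v). u @ v) ` ({w. p w \<noteq> 0} \<times> {w. q w \<noteq> 0})"
  have "{w. ncp_mul p q w \<noteq> 0} \<subseteq> ?S"
  proof
    fix w assume "w \<in> {w. ncp_mul p q w \<noteq> 0}"
    then obtain i where "p (take i w) * q (drop i w) \<noteq> 0"
      unfolding ncp_mul_def by (auto intro: sum.not_neutral_contains_not_neutral)
    then show "w \<in> ?S" by (intro image_eqI[of _ _ "(take i w, drop i w)"]) auto
  qed
  moreover have "finite ?S" using assms by (simp add: free_alg_def)
  ultimately show ?thesis unfolding free_alg_def by (auto intro: finite_subset)
qed

lemma free_alg_add: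
  fixes p q :: "'a::comm_ring_1 ncp"
  assumes "p \<in> free_alg" "q \<in> free_alg"
  shows "p + q \<in> free_alg"
proof -
  have "{w. (p + q) w \<noteq> 0} \<subseteq> {w. p w \<noteq> 0} \<union> {w. q w \<noteq> 0}" by auto
  with assms show ?thesis unfolding free_alg_def by (auto intro: finite_subset)
qed

lemma free_alg_uminus: "(p :: 'a::comm_ring_1 ncp) \<in> free_alg \<Longrightarrow> - p \<in> free_alg"
  by (simp add: free_alg_def)

lemma free_alg_diff: "(p :: 'a::comm_ring_1 ncp) \<in> free_alg \<Longrightarrow> q \<in> free_alg \<Longrightarrow> p - q \<in> free_alg"
  using free_alg_add[of p "- q"] free_alg_uminus[of q] by simp

lemma free_alg_subset_finite: "{w. p w \<noteq> 0} \<subseteq> S \<Longrightarrow> finite S \<Longrightarrow> p \<in> free_alg"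
  unfolding free_alg_def by (auto intro: finite_subset)

lemma free_alg_const: "ncp_const c \<in> free_alg"
  by (rule free_alg_subset_finite[of _ "{[]}"]) (auto simp: ncp_const_def)

lemma free_alg_gen: "ncp_gen g \<in> free_alg"
  by (rule free_alg_subset_finite[of _ "{[g]}"]) (auto simp: ncp_gen_def)

lemma free_alg_word: "ncp_word u \<in> free_alg"
  by (rule free_alg_subset_finite[of _ "{u}"]) (auto simp: ncp_word_def)

lemma free_alg_zero: "0 \<in> free_alg"
  by (simp add: free_alg_def)

typedef (overloaded) 'a free_algebra = "free_alg :: 'a::comm_ring_1 ncp set"
  using free_alg_zero by blast

setup_lifting type_definition_free_algebra

instantiation free_algebra :: (comm_ring_1) ring_1
begin
lift_definition zero_free_algebra :: "'a free_algebra" is 0 by (rule free_alg_zero)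
lift_definition one_free_algebra :: "'a free_algebra" is "ncp_const 1" by (rule free_alg_const)
lift_definition plus_free_algebra :: "'a free_algebra \<Rightarrow> 'a free_algebra \<Rightarrow> 'a free_algebra"
  is "(+)" by (rule free_alg_add)
lift_definition minus_free_algebra :: "'a free_algebra \<Rightarrow> 'a free_algebra \<Rightarrow> 'a free_algebra"
  is "(-)" by (rule free_alg_diff)
lift_definition uminus_free_algebra :: "'a free_algebra \<Rightarrow> 'a free_algebra"
  is uminus by (rule free_alg_uminus)
lift_definition times_free_algebra :: "'a free_algebra \<Rightarrow> 'a free_algebra \<Rightarrow> 'a free_algebra"
  is ncp_mul by (rule free_alg_mul)
instance
proof
  fix x y z :: "'a free_algebra"
  show "x + y + z = x + (y + z)" by transfer (simp add: add.assoc)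
  show "x + y = y + x" by transfer (simp add: add.commute)
  show "0 + x = x" by transfer simp
  show "- x + x = 0" by transfer simp
  show "x - y = x + - y" by transfer simp
  show "x * y * z = x * (y * z)" by transfer (rule ncp_mul_assoc)
  show "(x + y) * z = x * z + y * z" by transfer (rule ncp_mul_add_left)
  show "x * (y + z) = x * y + x * z" by transfer (rule ncp_mul_add_right)
  show "1 * x = x" by transfer (simp add: ncp_mul_const_left)
  show "x * 1 = x" by transfer (simp add: ncp_mul_const_right)
  show "(0::'a free_algebra) \<noteq> 1" by transfer (simp add: fun_eq_iff ncp_const_def)
qed
end

lift_definition fa_gen :: "gen \<Rightarrow> 'a::comm_ring_1 free_algebra" is ncp_gen by (rule free_alg_gen)
lift_definition fa_const :: "'a \<Rightarrow> 'a::comm_ring_1 free_algebra" is ncp_const by (rule free_alg_const)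
lift_definition fa_word :: "gen list \<Rightarrow> 'a::comm_ring_1 free_algebra" is ncp_word by (rule free_alg_word)

lemma Rep_fa_const_mult: "Rep_free_algebra (fa_const c * x) = (\<lambda>w. c * Rep_free_algebra x w)"
  by transfer (rule ncp_mul_const_left)

lemma fa_const_commute: "fa_const c * x = x * fa_const c"
  by transfer (simp add: ncp_mul_const_left ncp_mul_const_right mult.commute)

lemma fa_const_add: "fa_const (c + d) = fa_const c + fa_const d"
  by transfer (simp add: fun_eq_iff ncp_const_def)

lemma fa_const_mult: "fa_const (c * d) = fa_const c * fa_const d"
  by transfer (simp only: ncp_mul_const_left, simp add: fun_eq_iff ncp_const_def)

lemma fa_const_one: "fa_const 1 = 1"
  by transfer simp

lemma fa_const_zero: "fa_const 0 = 0"
  by transfer (simp add: fun_eq_iff ncp_const_def)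

lemma fa_const_minus_one: "fa_const (- 1) * x = - x"
  by transfer (simp add: ncp_mul_const_left fun_eq_iff)

lemma mult_fa_const_left_commute: "x * (fa_const c * y) = fa_const c * (x * y)"
  by (metis fa_const_commute mult.assoc)

lemma fa_word_Nil: "fa_word [] = 1"
  by transfer (simp add: fun_eq_iff ncp_word_def ncp_const_def)

lemma fa_word_Cons: "fa_word (g # u) = fa_gen g * fa_word u"
  by transfer (simp add: ncp_mul_gen_word)

lemma fa_word_append: "fa_word (u @ v) = fa_word u * fa_word v"
  by (induction u) (simp_all add: fa_word_Nil fa_word_Cons mult.assoc)

lemma Rep_free_algebra_sum: "Rep_free_algebra (sum f S) w = (\<Sum>s\<in>S. Rep_free_algebra (f s) w)"
  by (induction S rule: infinite_finite_induct) (simp_all add: zero_free_algebra.rep_eq plus_free_algebra.rep_eq)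

definition fa_supp :: "'a::comm_ring_1 free_algebra \<Rightarrow> gen list set" where
  "fa_supp x = {w. Rep_free_algebra x w \<noteq> 0}"

lemma finite_fa_supp: "finite (fa_supp x)"
  using Rep_free_algebra[of x] by (simp add: fa_supp_def free_alg_def)

lemma free_algebra_word_expansion:
  "x = (\<Sum>u\<in>fa_supp x. fa_const (Rep_free_algebra x u) * fa_word u)"
proof (rule Rep_free_algebra_inject[THEN iffD1, symmetric], rule ext)
  fix w
  have "Rep_free_algebra (\<Sum>u\<in>fa_supp x. fa_const (Rep_free_algebra x u) * fa_word u) w
      = (\<Sum>u\<in>fa_supp x. if w = u then Rep_free_algebra x u else 0)"
    by (simp add: Rep_free_algebra_sum Rep_fa_const_mult fa_word.rep_eq ncp_word_def if_distrib
        cong: if_cong)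
  also have "\<dots> = Rep_free_algebra x w"
    using finite_fa_supp[of x] by (simp add: fa_supp_def)
  finally show "Rep_free_algebra (\<Sum>u\<in>fa_supp x. fa_const (Rep_free_algebra x u) * fa_word u) w
      = Rep_free_algebra x w" .
qed

section \<open>The free algebra acting on sequences\<close>

definition linear_op :: "((nat \<Rightarrow> 'a::field) \<Rightarrow> nat \<Rightarrow> 'a) \<Rightarrow> bool" where
  "linear_op T \<longleftrightarrow> (\<forall>u v. T (\<lambda>i. u i + v i) = (\<lambda>i. T u i + T v i))
                  \<and> (\<forall>c u. T (\<lambda>i. c * u i) = (\<lambda>i. c * T u i))"

lemma linear_op_add: "linear_op T \<Longrightarrow> T (\<lambda>i. u i + v i) = (\<lambda>i. T u i + T v i)"
  unfolding linear_op_def by blast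

lemma linear_op_scale: "linear_op T \<Longrightarrow> T (\<lambda>i. c * u i) = (\<lambda>i. c * T u i)"
  unfolding linear_op_def by blast

lemma linear_op_zero: "linear_op T \<Longrightarrow> T (\<lambda>i. 0) = (\<lambda>i. 0)"
  using linear_op_scale[of T 0 "\<lambda>i. 0"] by simp

lemma linear_op_diff: "linear_op T \<Longrightarrow> T (\<lambda>i. u i - v i) = (\<lambda>i. T u i - T v i)"
  using linear_op_add[of T u "\<lambda>i. (- 1) * v i"] linear_op_scale[of T "- 1" v] by simp

lemma linear_op_sum:
  assumes "linear_op T"
  shows "T (\<lambda>i. \<Sum>s\<in>S. c s * f s i) = (\<lambda>i. \<Sum>s\<in>S. c s * T (f s) i)"
proof (induction S rule: infinite_finite_induct)
  case (insert s S)
  then show ?case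
    using linear_op_add[OF assms, of "\<lambda>i. c s * f s i"] linear_op_scale[OF assms] by simp
qed (simp_all add: linear_op_zero[OF assms])

lemma linear_op_comp: "linear_op S \<Longrightarrow> linear_op T \<Longrightarrow> linear_op (\<lambda>v. S (T v))"
  unfolding linear_op_def by simp

lemma linear_op_id: "linear_op (\<lambda>v. v)"
  unfolding linear_op_def by simp

lemma Mv_pointwise:
  assumes "v \<in> Mv" "w \<in> Mv" "\<And>i. v i = 0 \<Longrightarrow> w i = 0 \<Longrightarrow> u i = 0"
  shows "u \<in> Mv"
proof -
  have "{i. u i \<noteq> 0} \<subseteq> {i. v i \<noteq> 0} \<union> {i. w i \<noteq> 0}" using assms(3) by blast
  with assms(1,2) show ?thesis unfolding Mv_def by (auto intro: finite_subset)
qed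

lemma Mv_zero: "(\<lambda>i. 0) \<in> Mv"
  by (simp add: Mv_def)

lemma Mv_add: "(v :: nat \<Rightarrow> 'a::comm_ring_1) \<in> Mv \<Longrightarrow> w \<in> Mv \<Longrightarrow> (\<lambda>i. v i + w i) \<in> Mv"
  using Mv_pointwise[of v w "\<lambda>i. v i + w i"] by simp

lemma Mv_mult: "(v :: nat \<Rightarrow> 'a::comm_ring_1) \<in> Mv \<Longrightarrow> (\<lambda>i. f i * v i) \<in> Mv"
  using Mv_pointwise[of v "\<lambda>i. 0" "\<lambda>i. f i * v i"] Mv_zero by simp

lemma Mv_diff: "(v :: nat \<Rightarrow> 'a::comm_ring_1) \<in> Mv \<Longrightarrow> w \<in> Mv \<Longrightarrow> (\<lambda>i. v i - w i) \<in> Mv"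
  using Mv_pointwise[of v w "\<lambda>i. v i - w i"] by simp

lemma Mv_shift_up: "v \<in> Mv \<Longrightarrow> (\<lambda>i. if i = 0 then 0 else v (i - 1)) \<in> Mv"
proof -
  assume "v \<in> Mv"
  moreover have "{i. (if i = 0 then 0 else v (i - 1)) \<noteq> 0} \<subseteq> Suc ` {i. v i \<noteq> 0}"
  proof
    fix i assume "i \<in> {i. (if i = 0 then 0 else v (i - 1)) \<noteq> 0}"
    then have "i \<noteq> 0" "v (i - 1) \<noteq> 0" by (auto split: if_splits)
    then show "i \<in> Suc ` {i. v i \<noteq> 0}" by (intro image_eqI[of _ _ "i - 1"]) auto
  qed
  ultimately show ?thesis unfolding Mv_def mem_Collect_eq by (meson finite_imageI finite_subset)
qed

lemma Mv_shift_down: "v \<in> Mv \<Longrightarrow> (\<lambda>i. v (Suc i)) \<in> Mv"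
  unfolding Mv_def using finite_vimageI[OF _ inj_Suc, of "{i. v i \<noteq> 0}"] by (simp add: vimage_def)

lemma Mv_sum: "(\<And>s. s \<in> S \<Longrightarrow> (f s :: nat \<Rightarrow> 'a::comm_ring_1) \<in> Mv) \<Longrightarrow> (\<lambda>i. \<Sum>s\<in>S. f s i) \<in> Mv"
  by (induction S rule: infinite_finite_induct) (simp_all add: Mv_zero Mv_add)

locale racah_ops =
  fixes a b c nu :: "'a::field"
begin

abbreviation A where "A \<equiv> actA a b c nu"
abbreviation B where "B \<equiv> actB a b c nu"
abbreviation C where "C \<equiv> actC a b c nu"
abbreviation D where "D \<equiv> actD a b c nu"

lemma linear_op_actA: "linear_op A"
  unfolding linear_op_def actA_def by (simp add: fun_eq_iff algebra_simps)

lemma linear_op_actB: "linear_op B"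
  unfolding linear_op_def actB_def by (simp add: fun_eq_iff algebra_simps)

lemma actC_via_AB:
  "linear_op T \<Longrightarrow> T (C v) = (\<lambda>i. eta a b c nu * T v i - T (A v) i - T (B v) i)"
  using linear_op_diff[of T "\<lambda>i. eta a b c nu * v i - A v i" "B v"]
    linear_op_diff[of T "\<lambda>i. eta a b c nu * v i" "A v"] linear_op_scale[of T]
  unfolding actC_def by simp

lemma actD_via_AB:
  "linear_op T \<Longrightarrow> T (D v) = (\<lambda>i. (T (A (B v)) i - T (B (A v)) i) / 2)"
  using linear_op_scale[of T "1 / 2"] linear_op_diff[of T]
  unfolding actD_def by (simp add: field_simps)

lemma linear_op_actC: "linear_op C"
  unfolding linear_op_def actC_def
  by (simp add: fun_eq_iff algebra_simps linear_op_add[OF linear_op_actA] linear_op_add[OF linear_op_actB]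
      linear_op_scale[OF linear_op_actA] linear_op_scale[OF linear_op_actB])

lemma linear_op_actD: "linear_op D"
  unfolding linear_op_def actD_def
  by (simp add: fun_eq_iff algebra_simps add_divide_distrib diff_divide_distrib
      linear_op_add[OF linear_op_actA] linear_op_add[OF linear_op_actB]
      linear_op_scale[OF linear_op_actA] linear_op_scale[OF linear_op_actB])

lemma linear_op_word_act: "linear_op (word_act a b c nu w)"
proof (induction w)
  case (Cons g w)
  have "linear_op (gen_act a b c nu g)"
    by (cases g) (simp_all add: linear_op_actA linear_op_actB linear_op_actC linear_op_actD)
  with Cons show ?case by (simp add: linear_op_comp)
qed (simp add: linear_op_id)

lemma word_act_append: "word_act a b c nu (u @ w) v = word_act a b c nu u (word_act a b c nu w v)"
  by (induction u) simp_all

lemma actA_Mv: "v \<in> Mv \<Longrightarrow> A v \<in> Mv"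
  unfolding actA_def by (intro Mv_add Mv_mult Mv_shift_up)

lemma actB_Mv: "v \<in> Mv \<Longrightarrow> B v \<in> Mv"
  unfolding actB_def
  using Mv_add[OF Mv_mult[of v "theta b nu"] Mv_mult[OF Mv_shift_down, of v "\<lambda>i. phi a b c nu (Suc i)"]]
  by simp

lemma actC_Mv: "v \<in> Mv \<Longrightarrow> C v \<in> Mv"
  unfolding actC_def by (intro Mv_diff Mv_mult actA_Mv actB_Mv)

lemma actD_Mv: "v \<in> Mv \<Longrightarrow> D v \<in> Mv"
  using Mv_pointwise[of "A (B v)" "B (A v)" "D v"] by (simp add: actD_def actA_Mv actB_Mv)

lemma word_act_Mv: "v \<in> Mv \<Longrightarrow> word_act a b c nu w v \<in> Mv"
proof (induction w)
  case (Cons g w)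
  then show ?case by (cases g) (simp_all add: actA_Mv actB_Mv actC_Mv actD_Mv)
qed simp

definition act :: "'a free_algebra \<Rightarrow> (nat \<Rightarrow> 'a) \<Rightarrow> nat \<Rightarrow> 'a" where
  "act x = mact a b c nu (Rep_free_algebra x)"

lemma act_eq_superset:
  assumes "finite F" "fa_supp x \<subseteq> F"
  shows "act x v = (\<lambda>i. \<Sum>w\<in>F. Rep_free_algebra x w * word_act a b c nu w v i)"
  unfolding act_def mact_def
  by (rule ext, rule sum.mono_neutral_left) (use assms in \<open>auto simp: fa_supp_def\<close>)

lemma act_eq: "act x v = (\<lambda>i. \<Sum>w\<in>fa_supp x. Rep_free_algebra x w * word_act a b c nu w v i)"
  by (rule act_eq_superset[OF finite_fa_supp subset_refl])

lemma act_add: "act (x + y) v = (\<lambda>i. act x v i + act y v i)"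
proof -
  have F: "finite (fa_supp x \<union> fa_supp y)" by (simp add: finite_fa_supp)
  have "fa_supp (x + y) \<subseteq> fa_supp x \<union> fa_supp y"
    by (auto simp: fa_supp_def plus_free_algebra.rep_eq)
  then show ?thesis
    using act_eq_superset[OF F] act_eq_superset[OF F, of x] act_eq_superset[OF F, of y]
    by (simp add: plus_free_algebra.rep_eq distrib_right sum.distrib)
qed

lemma act_const_mult: "act (fa_const k * x) v = (\<lambda>i. k * act x v i)"
proof -
  have "fa_supp (fa_const k * x) \<subseteq> fa_supp x"
    by (auto simp: fa_supp_def Rep_fa_const_mult)
  then show ?thesis
    using act_eq_superset[OF finite_fa_supp, of "fa_const k * x" x] act_eq[of x]
    by (simp add: Rep_fa_const_mult sum_distrib_left mult.assoc)
qed

lemma act_zero: "act 0 v = (\<lambda>i. 0)"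
  by (simp add: act_eq fa_supp_def zero_free_algebra.rep_eq)

lemma act_diff: "act (x - y) v = (\<lambda>i. act x v i - act y v i)"
proof -
  have "x - y = x + fa_const (- 1) * y" by (simp add: fa_const_minus_one)
  then show ?thesis by (simp only: act_add act_const_mult) simp
qed

lemma act_sum: "act (sum f S) v = (\<lambda>i. \<Sum>s\<in>S. act (f s) v i)"
  by (induction S rule: infinite_finite_induct) (simp_all add: act_zero act_add)

lemma act_word: "act (fa_word u) v = word_act a b c nu u v"
  using act_eq_superset[of "{u}" "fa_word u"]
  by (simp add: fa_supp_def fa_word.rep_eq ncp_word_def)

lemma act_one: "act 1 v = v"
  using act_word[of "[]"] by (simp add: fa_word_Nil)

lemma act_gen: "act (fa_gen g) v = gen_act a b c nu g v"
  using act_word[of "[g]"] by (simp add: fa_word_Cons fa_word_Nil)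

lemma act_const: "act (fa_const k) v = (\<lambda>i. k * v i)"
  using act_const_mult[of k 1] by (simp add: act_one)

lemma act_word_mult: "act (fa_word u * y) v = word_act a b c nu u (act y v)"
proof -
  let ?y = "Rep_free_algebra y"
  have "fa_word u * y = (\<Sum>w\<in>fa_supp y. fa_const (?y w) * fa_word (u @ w))"
    by (subst free_algebra_word_expansion[of y])
      (simp add: sum_distrib_left mult_fa_const_left_commute fa_word_append mult.assoc)
  then have "act (fa_word u * y) v = (\<lambda>i. \<Sum>w\<in>fa_supp y. ?y w * word_act a b c nu u (word_act a b c nu w v) i)"
    by (simp add: act_sum act_const_mult act_word word_act_append)
  also have "\<dots> = word_act a b c nu u (act y v)"
    by (simp add: act_eq linear_op_sum[OF linear_op_word_act])
  finally show ?thesis .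
qed

lemma act_mult: "act (x * y) v = act x (act y v)"
proof -
  have "act (x * y) v = act (\<Sum>u\<in>fa_supp x. fa_const (Rep_free_algebra x u) * (fa_word u * y)) v"
    by (subst free_algebra_word_expansion[of x]) (simp add: sum_distrib_right mult.assoc)
  then show ?thesis by (simp add: act_sum act_const_mult act_word_mult act_eq[of x])
qed

lemma linear_op_act: "linear_op (act x)"
  unfolding linear_op_def act_eq
  by (simp add: fun_eq_iff linear_op_add[OF linear_op_word_act] linear_op_scale[OF linear_op_word_act]
      distrib_left sum.distrib sum_distrib_left algebra_simps)

lemma act_Mv: "v \<in> Mv \<Longrightarrow> act x v \<in> Mv"
  unfolding act_eq by (intro Mv_sum Mv_mult word_act_Mv)

end

section \<open>The Racah relations on M\<close>

locale racah_module = racah_ops +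
  assumes char_ne_2: "(2::'a) \<noteq> 0"

definition unit_vec :: "nat \<Rightarrow> nat \<Rightarrow> 'a::{zero,one}" where
  "unit_vec j = (\<lambda>i. if i = j then 1 else 0)"

lemma m0_eq_unit_vec: "m0 = unit_vec 0"
  by (simp add: m0_def unit_vec_def)

lemma unit_vec_Mv: "unit_vec j \<in> Mv"
  by (simp add: Mv_def unit_vec_def)

lemma m0_Mv: "m0 \<in> Mv"
  by (simp add: m0_eq_unit_vec unit_vec_Mv)

lemma Mv_unit_vec_expansion:
  assumes "(v :: nat \<Rightarrow> 'a::comm_ring_1) \<in> Mv"
  shows "v = (\<lambda>i. \<Sum>j\<in>{j. v j \<noteq> 0}. v j * unit_vec j i)"
proof (rule ext)
  fix i
  have "(\<Sum>j\<in>{j. v j \<noteq> 0}. v j * unit_vec j i) = (\<Sum>j\<in>{j. v j \<noteq> 0}. if j = i then v i else 0)"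
    by (rule sum.cong) (auto simp: unit_vec_def)
  also have "\<dots> = v i" using assms by (simp add: Mv_def)
  finally show "v i = (\<Sum>j\<in>{j. v j \<noteq> 0}. v j * unit_vec j i)" by simp
qed

lemma linear_op_scalar_on_Mv:
  assumes T: "linear_op T" and unit: "\<And>j. T (unit_vec j) = (\<lambda>i. k * unit_vec j i)"
    and v: "v \<in> Mv"
  shows "T v = (\<lambda>i. k * v i)"
proof -
  have "T v = (\<lambda>i. \<Sum>j\<in>{j. v j \<noteq> 0}. v j * T (unit_vec j) i)"
    by (subst Mv_unit_vec_expansion[OF v]) (rule linear_op_sum[OF T])
  also have "\<dots> = (\<lambda>i. k * v i)"
    by (subst (2) Mv_unit_vec_expansion[OF v]) (simp add: unit sum_distrib_left algebra_simps)
  finally show ?thesis .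
qed

abbreviation fA :: "'a::comm_ring_1 free_algebra" where "fA \<equiv> fa_gen GA"
abbreviation fB :: "'a::comm_ring_1 free_algebra" where "fB \<equiv> fa_gen GB"
abbreviation fC :: "'a::comm_ring_1 free_algebra" where "fC \<equiv> fa_gen GC"
abbreviation fD :: "'a::comm_ring_1 free_algebra" where "fD \<equiv> fa_gen GD"

definition fa_alpha :: "'a::comm_ring_1 free_algebra" where
  "fa_alpha = (fA * fD - fD * fA) + fA * fC - fB * fA"
definition fa_beta :: "'a::comm_ring_1 free_algebra" where
  "fa_beta = (fB * fD - fD * fB) + fB * fA - fC * fB"
definition fa_gamma :: "'a::comm_ring_1 free_algebra" where
  "fa_gamma = (fC * fD - fD * fC) + fC * fB - fA * fC"
definition fa_delta :: "'a::comm_ring_1 free_algebra" where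
  "fa_delta = fA + fB + fC"

lemmas Rep_free_algebra_simps = plus_free_algebra.rep_eq minus_free_algebra.rep_eq
  times_free_algebra.rep_eq fa_gen.rep_eq fa_const.rep_eq

lemma Rep_fa_alpha: "Rep_free_algebra fa_alpha = alpha_el"
  by (simp add: fa_alpha_def alpha_el_def ncp_comm_def Rep_free_algebra_simps)
lemma Rep_fa_beta: "Rep_free_algebra fa_beta = beta_el"
  by (simp add: fa_beta_def beta_el_def ncp_comm_def Rep_free_algebra_simps)
lemma Rep_fa_gamma: "Rep_free_algebra fa_gamma = gamma_el"
  by (simp add: fa_gamma_def gamma_el_def ncp_comm_def Rep_free_algebra_simps)
lemma Rep_fa_delta: "Rep_free_algebra fa_delta = delta_el"
  by (simp add: fa_delta_def delta_el_def Rep_free_algebra_simps)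

lemma Rep_free_algebra_commutator:
  "ncp_comm (Rep_free_algebra x) (Rep_free_algebra y) = Rep_free_algebra (x * y - y * x)"
  by (simp add: ncp_comm_def Rep_free_algebra_simps)

lemma fa_gamma_eq:
  "fa_gamma = (fa_delta * fD - fD * fa_delta) - fa_alpha - (fa_beta :: 'a::comm_ring_1 free_algebra)"
  by (simp add: fa_gamma_def fa_alpha_def fa_beta_def fa_delta_def algebra_simps)

lemma nat_0_1_SS_induct: "P 0 \<Longrightarrow> P 1 \<Longrightarrow> (\<And>k. P (Suc (Suc k))) \<Longrightarrow> P n"
  by (metis One_nat_def not0_implies_Suc)

context racah_ops
begin

lemmas act_simps = act_add act_diff act_mult act_gen act_const act_one act_zero

text \<open>Substituting C = \<eta> - A - B and 2D = AB - BA turns 2\<alpha> and 2\<beta> into the following cubic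
  (Askey--Wilson type) expressions in A and B alone.\<close>

definition aw_alpha :: "(nat \<Rightarrow> 'a) \<Rightarrow> nat \<Rightarrow> 'a" where
  "aw_alpha v = (\<lambda>i. A (A (B v)) i - 2 * A (B (A v)) i + B (A (A v)) i
     - 2 * A (A v) i - 2 * A (B v) i - 2 * B (A v) i + 2 * eta a b c nu * A v i)"

definition aw_beta :: "(nat \<Rightarrow> 'a) \<Rightarrow> nat \<Rightarrow> 'a" where
  "aw_beta v = (\<lambda>i. 2 * B (A (B v)) i - B (B (A v)) i - A (B (B v)) i
     + 2 * B (B v) i + 2 * A (B v) i + 2 * B (A v) i - 2 * eta a b c nu * B v i)"

end

context racah_module
begin

lemma four_neq_zero: "(4::'a) \<noteq> 0"
  by (metis char_ne_2 mult_2 no_zero_divisors numeral_Bit0)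

lemma act_alpha_eq_aw_alpha: "act fa_alpha v = (\<lambda>i. aw_alpha v i / 2)"
proof -
  have "act fa_alpha v = (\<lambda>i. A (D v) i - D (A v) i + A (C v) i - B (A v) i)"
    unfolding fa_alpha_def by (simp add: act_simps)
  also have "\<dots> = (\<lambda>i. aw_alpha v i / 2)"
    unfolding actD_via_AB[OF linear_op_actA] actC_via_AB[OF linear_op_actA] aw_alpha_def
    using char_ne_2 four_neq_zero by (simp add: actD_def fun_eq_iff field_simps)
  finally show ?thesis .
qed

lemma act_beta_eq_aw_beta: "act fa_beta v = (\<lambda>i. aw_beta v i / 2)"
proof -
  have "act fa_beta v = (\<lambda>i. B (D v) i - D (B v) i + B (A v) i - C (B v) i)"
    unfolding fa_beta_def by (simp add: act_simps)
  also have "\<dots> = (\<lambda>i. aw_beta v i / 2)"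
    unfolding actD_via_AB[OF linear_op_actB] aw_beta_def
    using char_ne_2 four_neq_zero by (simp add: actD_def actC_def fun_eq_iff field_simps)
  finally show ?thesis .
qed

text \<open>The cases below are split until no index is of the form i - 1 with i a generic natural
  number; otherwise simp leaves undecided conditions such as i - 1 = i + 1 behind.\<close>

lemma aw_alpha_unit_vec: "aw_alpha (unit_vec j) i = 2 * zeta a b c nu * unit_vec j i"
proof -
  obtain h where nu: "nu = 2 * h"
  proof
    show "nu = 2 * (nu / 2)" using char_ne_2 by simp
  qed
  note defs = aw_alpha_def actA_def actB_def unit_vec_def
  note params = theta_def phi_def eta_def zeta_def
  have "i = j + 2 \<or> i = j + 1 \<or> i = j \<or> j = i + 1 \<or> (\<exists>k. i = j + 3 + k) \<or> (\<exists>k. j = i + 2 + k)"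
    by presburger
  then consider "i = j + 2" | "i = j + 1" | "i = j" | "j = i + 1"
    | k where "i = j + 3 + k" | k where "j = i + 2 + k"
    by blast
  then show ?thesis
  proof cases
    case 1
    show ?thesis unfolding 1 aw_alpha_def unfolding nu
      using char_ne_2 by (simp add: defs; simp add: params; algebra)
  next
    case 2
    show ?thesis unfolding 2 aw_alpha_def unfolding nu
      using char_ne_2 by (induct j rule: nat_0_1_SS_induct; simp add: defs; simp add: params; algebra)
  next
    case 3
    show ?thesis unfolding 3 aw_alpha_def unfolding nu
      using char_ne_2 by (induct j rule: nat_0_1_SS_induct; simp add: defs; simp add: params; algebra)
  next
    case 4
    show ?thesis unfolding 4 aw_alpha_def unfolding nu
      using char_ne_2 by (induct i rule: nat_0_1_SS_induct; simp add: defs; simp add: params; algebra)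
  next
    case 5
    show ?thesis unfolding 5 by (simp add: defs)
  next
    case 6
    show ?thesis unfolding 6 by (induct i rule: nat_0_1_SS_induct) (simp_all add: defs)
  qed
qed

lemma aw_beta_unit_vec: "aw_beta (unit_vec j) i = 2 * zeta_s a b c nu * unit_vec j i"
proof -
  obtain h where nu: "nu = 2 * h"
  proof
    show "nu = 2 * (nu / 2)" using char_ne_2 by simp
  qed
  note defs = aw_beta_def actA_def actB_def unit_vec_def
  note params = theta_def phi_def eta_def zeta_s_def
  have "j = i + 2 \<or> j = i + 1 \<or> i = j \<or> i = j + 1 \<or> (\<exists>k. j = i + 3 + k) \<or> (\<exists>k. i = j + 2 + k)"
    by presburger
  then consider "j = i + 2" | "j = i + 1" | "i = j" | "i = j + 1"
    | k where "j = i + 3 + k" | k where "i = j + 2 + k"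
    by blast
  then show ?thesis
  proof cases
    case 1
    show ?thesis unfolding 1 aw_beta_def unfolding nu
      using char_ne_2 by (induct i rule: nat_0_1_SS_induct; simp add: defs; simp add: params; algebra)
  next
    case 2
    show ?thesis unfolding 2 aw_beta_def unfolding nu
      using char_ne_2 by (induct i rule: nat_0_1_SS_induct; simp add: defs; simp add: params; algebra)
  next
    case 3
    show ?thesis unfolding 3 aw_beta_def unfolding nu
      using char_ne_2 by (induct j rule: nat_0_1_SS_induct; simp add: defs; simp add: params; algebra)
  next
    case 4
    show ?thesis unfolding 4 aw_beta_def unfolding nu
      using char_ne_2 by (simp add: defs; simp add: params; algebra)
  next
    case 5
    show ?thesis unfolding 5 by (induct i rule: nat_0_1_SS_induct) (simp_all add: defs)
  next
    case 6
    show ?thesis unfolding 6 by (simp add: defs)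
  qed
qed

lemma act_alpha_Mv: "v \<in> Mv \<Longrightarrow> act fa_alpha v = (\<lambda>i. zeta a b c nu * v i)"
  by (rule linear_op_scalar_on_Mv[OF linear_op_act])
    (simp add: act_alpha_eq_aw_alpha aw_alpha_unit_vec char_ne_2)

lemma act_beta_Mv: "v \<in> Mv \<Longrightarrow> act fa_beta v = (\<lambda>i. zeta_s a b c nu * v i)"
  by (rule linear_op_scalar_on_Mv[OF linear_op_act])
    (simp add: act_beta_eq_aw_beta aw_beta_unit_vec char_ne_2)

lemma act_delta: "act fa_delta v = (\<lambda>i. eta a b c nu * v i)"
  unfolding fa_delta_def by (simp add: act_simps actC_def)

lemma act_commutator_of_scalar:
  assumes "\<And>u. u \<in> Mv \<Longrightarrow> act z u = (\<lambda>i. k * u i)" "v \<in> Mv"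
  shows "act (z * x - x * z) v = (\<lambda>i. 0)"
  using assms by (simp add: act_diff act_mult act_Mv linear_op_scale[OF linear_op_act])

lemma act_gamma_Mv:
  assumes v: "v \<in> Mv"
  shows "act fa_gamma v = (\<lambda>i. (- zeta a b c nu - zeta_s a b c nu) * v i)"
proof -
  have "act (fa_delta * fD - fD * fa_delta) v = (\<lambda>i. 0)"
    by (rule act_commutator_of_scalar[of fa_delta "eta a b c nu"]) (simp_all add: act_delta v)
  then have "act (fa_delta * fD) v i = act (fD * fa_delta) v i" for i
    by (simp add: act_diff fun_eq_iff)
  then show ?thesis
    unfolding fa_gamma_eq act_diff by (simp add: act_alpha_Mv act_beta_Mv v algebra_simps)
qed

lemma actD_double: "D v i + D v i = A (B v) i - B (A v) i"
  unfolding actD_def by (simp only: add_divide_distrib[symmetric] mult_2[symmetric]) (simp add: char_ne_2)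

lemma central_el_acts_as_scalar:
  assumes "z \<in> {alpha_el, beta_el, gamma_el}"
  shows "\<exists>z' k. z = Rep_free_algebra z' \<and> (\<forall>u\<in>Mv. act z' u = (\<lambda>i. k * u i))"
proof -
  from assms consider "z = alpha_el" | "z = beta_el" | "z = gamma_el" by blast
  then show ?thesis
  proof cases
    case 1
    show ?thesis
      by (intro exI[of _ fa_alpha] exI[of _ "zeta a b c nu"]) (simp add: 1 Rep_fa_alpha act_alpha_Mv)
  next
    case 2
    show ?thesis
      by (intro exI[of _ fa_beta] exI[of _ "zeta_s a b c nu"]) (simp add: 2 Rep_fa_beta act_beta_Mv)
  next
    case 3
    show ?thesis
      by (intro exI[of _ fa_gamma] exI[of _ "- zeta a b c nu - zeta_s a b c nu"])
        (simp add: 3 Rep_fa_gamma act_gamma_Mv)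
  qed
qed

lemma act_AB_relation: "act (fA * fB - fB * fA - (fD + fD)) v = (\<lambda>i. 0)"
  by (simp add: act_simps actD_double)

lemma act_BC_relation: "act (fB * fC - fC * fB - (fD + fD)) v = (\<lambda>i. 0)"
proof -
  have "act (fB * fC - fC * fB - (fD + fD)) v = (\<lambda>i. B (C v) i - C (B v) i - (D v i + D v i))"
    by (simp add: act_simps)
  then show ?thesis
    unfolding actC_via_AB[OF linear_op_actB] by (simp add: actC_def actD_double)
qed

lemma act_CA_relation: "act (fC * fA - fA * fC - (fD + fD)) v = (\<lambda>i. 0)"
proof -
  have "act (fC * fA - fA * fC - (fD + fD)) v = (\<lambda>i. C (A v) i - A (C v) i - (D v i + D v i))"
    by (simp add: act_simps)
  then show ?thesis
    unfolding actC_via_AB[OF linear_op_actA] by (simp add: actC_def actD_double)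
qed

lemma act_racah_rels:
  assumes "s \<in> racah_rels"
  shows "\<exists>x. s = Rep_free_algebra x \<and> (\<forall>v\<in>Mv. act x v = (\<lambda>i. 0))"
proof -
  from assms consider
      "s = ncp_comm rA rB - (rD + rD)" | "s = ncp_comm rB rC - (rD + rD)" | "s = ncp_comm rC rA - (rD + rD)"
    | z X where "s = ncp_comm z X" "z \<in> {alpha_el, beta_el, gamma_el}" "X \<in> {rA, rB, rC, rD}"
    unfolding racah_rels_def by blast
  then show ?thesis
  proof cases
    case 1
    show ?thesis
      by (intro exI[of _ "fA * fB - fB * fA - (fD + fD)"] conjI ballI act_AB_relation)
        (simp add: 1 ncp_comm_def Rep_free_algebra_simps)
  next
    case 2
    show ?thesis
      by (intro exI[of _ "fB * fC - fC * fB - (fD + fD)"] conjI ballI act_BC_relation)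
        (simp add: 2 ncp_comm_def Rep_free_algebra_simps)
  next
    case 3
    show ?thesis
      by (intro exI[of _ "fC * fA - fA * fC - (fD + fD)"] conjI ballI act_CA_relation)
        (simp add: 3 ncp_comm_def Rep_free_algebra_simps)
  next
    case 4
    obtain z' k where z': "z = Rep_free_algebra z'" and k: "\<And>u. u \<in> Mv \<Longrightarrow> act z' u = (\<lambda>i. k * u i)"
      using central_el_acts_as_scalar[OF 4(2)] by blast
    obtain g where "X = Rep_free_algebra (fa_gen g)"
      using 4(3) by (auto simp: fa_gen.rep_eq[symmetric])
    then show ?thesis
      by (intro exI[of _ "z' * fa_gen g - fa_gen g * z'"] conjI ballI act_commutator_of_scalar[OF k])
        (simp_all add: 4(1) z' Rep_free_algebra_commutator)
  qed
qed

lemma act_racah_ideal: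
  assumes "s \<in> racah_ideal"
  shows "\<exists>x. s = Rep_free_algebra x \<and> (\<forall>v\<in>Mv. act x v = (\<lambda>i. 0))"
  using assms unfolding racah_ideal_def
proof induction
  case zero
  show ?case by (intro exI[of _ 0] conjI ballI) (simp_all add: zero_free_algebra.rep_eq act_zero)
next
  case (gen s)
  then show ?case by (rule act_racah_rels)
next
  case (add x y)
  then obtain x' y' where "x = Rep_free_algebra x'" "y = Rep_free_algebra y'"
    "\<forall>v\<in>Mv. act x' v = (\<lambda>i. 0)" "\<forall>v\<in>Mv. act y' v = (\<lambda>i. 0)" by blast
  then show ?case
    by (intro exI[of _ "x' + y'"] conjI ballI) (simp_all add: plus_free_algebra.rep_eq act_add)
next
  case (mul x p q)
  then obtain x' where "x = Rep_free_algebra x'" "\<forall>v\<in>Mv. act x' v = (\<lambda>i. 0)" by blast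
  then show ?case
    by (intro exI[of _ "Abs_free_algebra p * (x' * Abs_free_algebra q)"] conjI ballI)
      (simp_all add: times_free_algebra.rep_eq Abs_free_algebra_inverse mul.hyps act_mult act_Mv
        linear_op_zero[OF linear_op_act])
qed

lemma act_I_gens:
  assumes "s \<in> I_gens a b c nu"
  shows "\<exists>x. s = Rep_free_algebra x \<and> act x m0 = (\<lambda>i. 0)"
proof -
  from assms consider "s = rB - ncp_const (theta b nu 0)"
    | "s = ncp_mul (rB - ncp_const (theta b nu 1)) (rA - ncp_const (theta a nu 0)) - ncp_const (phi a b c nu 1)"
    | "s = alpha_el - ncp_const (zeta a b c nu)" | "s = beta_el - ncp_const (zeta_s a b c nu)"
    | "s = delta_el - ncp_const (eta a b c nu)"
    unfolding I_gens_def by blast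
  then show ?thesis
  proof cases
    case 1
    show ?thesis
      by (intro exI[of _ "fB - fa_const (theta b nu 0)"] conjI)
        (simp_all add: 1 Rep_free_algebra_simps act_simps actB_def m0_def fun_eq_iff)
  next
    case 2
    have "act ((fB - fa_const (theta b nu 1)) * (fA - fa_const (theta a nu 0))
        - fa_const (phi a b c nu 1)) m0 i = 0" for i
      by (induct i rule: nat_0_1_SS_induct) (simp_all add: act_simps actA_def actB_def m0_def)
    then show ?thesis
      by (intro exI[of _ "(fB - fa_const (theta b nu 1)) * (fA - fa_const (theta a nu 0))
          - fa_const (phi a b c nu 1)"] conjI) (simp_all add: 2 Rep_free_algebra_simps fun_eq_iff)
  next
    case 3
    show ?thesis
      by (intro exI[of _ "fa_alpha - fa_const (zeta a b c nu)"] conjI)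
        (simp_all add: 3 Rep_free_algebra_simps Rep_fa_alpha act_diff act_const act_alpha_Mv[OF m0_Mv])
  next
    case 4
    show ?thesis
      by (intro exI[of _ "fa_beta - fa_const (zeta_s a b c nu)"] conjI)
        (simp_all add: 4 Rep_free_algebra_simps Rep_fa_beta act_diff act_const act_beta_Mv[OF m0_Mv])
  next
    case 5
    show ?thesis
      by (intro exI[of _ "fa_delta - fa_const (eta a b c nu)"] conjI)
        (simp_all add: 5 Rep_free_algebra_simps Rep_fa_delta act_diff act_const act_delta)
  qed
qed

lemma act_I_lift:
  assumes "s \<in> I_lift a b c nu"
  shows "\<exists>x. s = Rep_free_algebra x \<and> act x m0 = (\<lambda>i. 0)"
  using assms unfolding I_lift_def
proof induction
  case zero
  show ?case by (intro exI[of _ 0] conjI) (simp_all add: zero_free_algebra.rep_eq act_zero)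
next
  case (gen s)
  with act_racah_ideal act_I_gens m0_Mv show ?case by blast
next
  case (add x y)
  then obtain x' y' where "x = Rep_free_algebra x'" "y = Rep_free_algebra y'"
    "act x' m0 = (\<lambda>i. 0)" "act y' m0 = (\<lambda>i. 0)" by blast
  then show ?case
    by (intro exI[of _ "x' + y'"] conjI) (simp_all add: plus_free_algebra.rep_eq act_add)
next
  case (mul x p)
  then obtain x' where "x = Rep_free_algebra x'" "act x' m0 = (\<lambda>i. 0)" by blast
  then show ?case
    by (intro exI[of _ "Abs_free_algebra p * x'"] conjI)
      (simp_all add: times_free_algebra.rep_eq Abs_free_algebra_inverse mul.hyps act_mult
        linear_op_zero[OF linear_op_act])
qed

end

section \<open>The ideals of the free algebra\<close>

definition R_fa :: "'a::comm_ring_1 free_algebra set" where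
  "R_fa = {x. Rep_free_algebra x \<in> racah_ideal}"

lemma R_fa_add: "x \<in> R_fa \<Longrightarrow> y \<in> R_fa \<Longrightarrow> x + y \<in> R_fa"
  by (simp add: R_fa_def racah_ideal_def plus_free_algebra.rep_eq two_sided_ideal.add)

lemma R_fa_mult: "x \<in> R_fa \<Longrightarrow> p * (x * q) \<in> R_fa"
  by (simp add: R_fa_def racah_ideal_def times_free_algebra.rep_eq two_sided_ideal.mul
      Rep_free_algebra)

lemma R_fa_mult_left: "x \<in> R_fa \<Longrightarrow> p * x \<in> R_fa"
  using R_fa_mult[of x p 1] by simp

lemma R_fa_mult_right: "x \<in> R_fa \<Longrightarrow> x * q \<in> R_fa"
  using R_fa_mult[of x 1 q] by simp

lemma R_fa_diff: "x \<in> R_fa \<Longrightarrow> y \<in> R_fa \<Longrightarrow> x - y \<in> R_fa"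
  using R_fa_add[of x "fa_const (- 1) * y"] R_fa_mult_left[of y "fa_const (- 1)"]
  by (simp add: fa_const_minus_one)

lemma R_fa_rel: "Rep_free_algebra x \<in> racah_rels \<Longrightarrow> x \<in> R_fa"
  by (simp add: R_fa_def racah_ideal_def two_sided_ideal.gen)

lemma R_fa_AB: "fA * fB - fB * fA - (fD + fD) \<in> R_fa"
  by (rule R_fa_rel) (simp add: racah_rels_def ncp_comm_def Rep_free_algebra_simps)

lemma R_fa_CA: "fC * fA - fA * fC - (fD + fD) \<in> R_fa"
  by (rule R_fa_rel) (simp add: racah_rels_def ncp_comm_def Rep_free_algebra_simps)

lemma R_fa_alpha_A: "fa_alpha * fA - fA * fa_alpha \<in> R_fa"
  by (rule R_fa_rel)
    (auto simp: racah_rels_def Rep_free_algebra_commutator[symmetric] Rep_fa_alpha fa_gen.rep_eq)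

lemma R_fa_delta_A: "fa_delta * fA - fA * fa_delta \<in> R_fa"
proof -
  have eq: "fa_delta * fA - fA * fa_delta
      = (fC * fA - fA * fC - (fD + fD)) - (fA * fB - fB * fA - (fD + fD))"
    by (simp add: fa_delta_def algebra_simps)
  show ?thesis unfolding eq by (rule R_fa_diff[OF R_fa_CA R_fa_AB])
qed

lemma R_fa_commute_power: "z * fA - fA * z \<in> R_fa \<Longrightarrow> z * fA ^ n - fA ^ n * z \<in> R_fa"
proof (induction n)
  case 0
  show ?case by (simp add: R_fa_def racah_ideal_def zero_free_algebra.rep_eq two_sided_ideal.zero)
next
  case (Suc n)
  have "z * fA ^ Suc n - fA ^ Suc n * z = (z * fA - fA * z) * fA ^ n + fA * (z * fA ^ n - fA ^ n * z)"
    by (simp add: algebra_simps)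
  then show ?case
    using R_fa_add[OF R_fa_mult_right[OF Suc.prems] R_fa_mult_left[OF Suc.IH[OF Suc.prems]]] by (simp only:)
qed

context racah_ops
begin

definition I_fa :: "'a free_algebra set" where
  "I_fa = {x. Rep_free_algebra x \<in> I_lift a b c nu}"

lemma I_fa_zero: "0 \<in> I_fa"
  by (simp add: I_fa_def I_lift_def zero_free_algebra.rep_eq left_ideal.zero)

lemma I_fa_add: "x \<in> I_fa \<Longrightarrow> y \<in> I_fa \<Longrightarrow> x + y \<in> I_fa"
  by (simp add: I_fa_def I_lift_def plus_free_algebra.rep_eq left_ideal.add)

lemma I_fa_mult_left: "x \<in> I_fa \<Longrightarrow> p * x \<in> I_fa"
  by (simp add: I_fa_def I_lift_def times_free_algebra.rep_eq left_ideal.mul Rep_free_algebra)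

lemma I_fa_diff: "x \<in> I_fa \<Longrightarrow> y \<in> I_fa \<Longrightarrow> x - y \<in> I_fa"
  using I_fa_add[of x "fa_const (- 1) * y"] I_fa_mult_left[of y "fa_const (- 1)"]
  by (simp add: fa_const_minus_one)

lemma R_fa_subset_I_fa: "x \<in> R_fa \<Longrightarrow> x \<in> I_fa"
  by (simp add: I_fa_def R_fa_def I_lift_def left_ideal.gen)

lemma I_fa_gen: "Rep_free_algebra x \<in> I_gens a b c nu \<Longrightarrow> x \<in> I_fa"
  by (simp add: I_fa_def I_lift_def left_ideal.gen)

lemma I_fa_B: "fB - fa_const (theta b nu 0) \<in> I_fa"
  by (rule I_fa_gen) (simp add: I_gens_def Rep_free_algebra_simps)

lemma I_fa_BA:
  "(fB - fa_const (theta b nu 1)) * (fA - fa_const (theta a nu 0)) - fa_const (phi a b c nu 1) \<in> I_fa"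
  by (rule I_fa_gen) (simp add: I_gens_def Rep_free_algebra_simps)

lemma I_fa_alpha: "fa_alpha - fa_const (zeta a b c nu) \<in> I_fa"
  by (rule I_fa_gen) (simp add: I_gens_def Rep_free_algebra_simps Rep_fa_alpha)

lemma I_fa_delta: "fa_delta - fa_const (eta a b c nu) \<in> I_fa"
  by (rule I_fa_gen) (simp add: I_gens_def Rep_free_algebra_simps Rep_fa_delta)

lemma central_power_mod_I_fa:
  assumes "z * fA - fA * z \<in> R_fa" "z - fa_const k \<in> I_fa"
  shows "z * fA ^ n - fa_const k * fA ^ n \<in> I_fa"
proof -
  have "z * fA ^ n - fa_const k * fA ^ n = (z * fA ^ n - fA ^ n * z) + fA ^ n * (z - fa_const k)"
    by (simp add: algebra_simps fa_const_commute)
  then show ?thesis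
    using I_fa_add[OF R_fa_subset_I_fa[OF R_fa_commute_power[OF assms(1)]] I_fa_mult_left[OF assms(2)]]
    by (simp only:)
qed

end

context racah_module
begin

lemma I_fa_kills_m0:
  assumes "x \<in> I_fa"
  shows "act x m0 = (\<lambda>i. 0)"
proof -
  obtain x' where "Rep_free_algebra x = Rep_free_algebra x'" "act x' m0 = (\<lambda>i. 0)"
    using act_I_lift assms unfolding I_fa_def by blast
  then show ?thesis by (simp add: Rep_free_algebra_inject)
qed

end

section \<open>A spanning set of the quotient\<close>

context racah_ops
begin

inductive_set span_mod :: "(nat \<Rightarrow> 'a free_algebra) \<Rightarrow> 'a free_algebra set" for Bs where
  basis: "Bs j \<in> span_mod Bs"
| ideal: "x \<in> I_fa \<Longrightarrow> x \<in> span_mod Bs"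
| add: "x \<in> span_mod Bs \<Longrightarrow> y \<in> span_mod Bs \<Longrightarrow> x + y \<in> span_mod Bs"
| scale: "x \<in> span_mod Bs \<Longrightarrow> fa_const k * x \<in> span_mod Bs"

lemma span_mod_cong: "x - y \<in> I_fa \<Longrightarrow> y \<in> span_mod Bs \<Longrightarrow> x \<in> span_mod Bs"
  using span_mod.add[OF span_mod.ideal] by fastforce

lemma span_mod_diff: "x \<in> span_mod Bs \<Longrightarrow> y \<in> span_mod Bs \<Longrightarrow> x - y \<in> span_mod Bs"
  using span_mod.add[OF _ span_mod.scale[of y Bs "- 1"]] by (simp add: fa_const_minus_one)

lemma span_mod_sum: "(\<And>s. s \<in> S \<Longrightarrow> f s \<in> span_mod Bs) \<Longrightarrow> sum f S \<in> span_mod Bs"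
  by (induction S rule: infinite_finite_induct)
    (simp_all add: span_mod.ideal I_fa_zero span_mod.add)

lemma span_mod_mult_left:
  assumes "\<And>j. y * Bs j \<in> span_mod Bs'" and "x \<in> span_mod Bs"
  shows "y * x \<in> span_mod Bs'"
  using assms(2)
proof induction
  case (basis j)
  then show ?case by (rule assms(1))
next
  case (ideal x)
  then show ?case by (intro span_mod.ideal I_fa_mult_left)
next
  case (add x x')
  then show ?case by (simp add: distrib_left span_mod.add)
next
  case (scale x k)
  then show ?case by (simp add: mult_fa_const_left_commute span_mod.scale)
qed

lemma sum_lessThan_extend:
  fixes N K :: nat
  assumes "\<forall>j\<ge>N. cf j = 0" "N \<le> K"
  shows "(\<Sum>j<N. fa_const (cf j) * Bs j) = (\<Sum>j<K. fa_const (cf j) * Bs j)"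
proof (rule sum.mono_neutral_left)
  show "\<forall>i\<in>{..<K} - {..<N}. fa_const (cf i) * Bs i = 0"
  proof
    fix i assume "i \<in> {..<K} - {..<N}"
    then have "N \<le> i" by simp
    with assms(1) have "cf i = 0" by blast
    then show "fa_const (cf i) * Bs i = 0" by (simp add: fa_const_zero)
  qed
qed (use assms(2) in auto)

lemma span_mod_normal_form:
  assumes "x \<in> span_mod Bs"
  shows "\<exists>N cf. (\<forall>j\<ge>N. cf j = 0) \<and> x - (\<Sum>j<N. fa_const (cf j) * Bs j) \<in> I_fa"
  using assms
proof induction
  case (basis j)
  have "(\<Sum>i<Suc j. fa_const (if i = j then 1 else 0) * Bs i) = Bs j"
    by (simp add: fa_const_zero fa_const_one if_distrib cong: if_cong)
  then show ?case
    by (intro exI[of _ "Suc j"] exI[of _ "\<lambda>i. if i = j then 1 else 0"]) (simp add: I_fa_zero)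
next
  case (ideal x)
  then show ?case by (intro exI[of _ 0] exI[of _ "\<lambda>i. 0"]) simp
next
  case (add x y)
  then obtain N cf M cg where cf: "\<forall>j\<ge>N. cf j = 0" "x - (\<Sum>j<N. fa_const (cf j) * Bs j) \<in> I_fa"
    and cg: "\<forall>j\<ge>M. cg j = 0" "y - (\<Sum>j<M. fa_const (cg j) * Bs j) \<in> I_fa"
    by blast
  let ?K = "max N M"
  have "x + y - (\<Sum>j<?K. fa_const (cf j + cg j) * Bs j)
      = (x - (\<Sum>j<N. fa_const (cf j) * Bs j)) + (y - (\<Sum>j<M. fa_const (cg j) * Bs j))"
    using sum_lessThan_extend[OF cf(1), of ?K Bs] sum_lessThan_extend[OF cg(1), of ?K Bs]
    by (simp add: fa_const_add distrib_right sum.distrib)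
  then have "x + y - (\<Sum>j<?K. fa_const (cf j + cg j) * Bs j) \<in> I_fa"
    using I_fa_add[OF cf(2) cg(2)] by (simp only:)
  with cf(1) cg(1) show ?case by (intro exI[of _ ?K] exI[of _ "\<lambda>j. cf j + cg j"]) simp
next
  case (scale x k)
  then obtain N cf where cf: "\<forall>j\<ge>N. cf j = 0" "x - (\<Sum>j<N. fa_const (cf j) * Bs j) \<in> I_fa"
    by blast
  have "fa_const k * x - (\<Sum>j<N. fa_const (k * cf j) * Bs j)
      = fa_const k * (x - (\<Sum>j<N. fa_const (cf j) * Bs j))"
    by (simp add: right_diff_distrib sum_distrib_left fa_const_mult mult.assoc)
  then show ?case
    using cf I_fa_mult_left[OF cf(2)]
    by (intro exI[of _ N] exI[of _ "\<lambda>j. k * cf j"]) simp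
qed

lemma fA_mult_span_A_powers: "x \<in> span_mod (power fA) \<Longrightarrow> fA * x \<in> span_mod (power fA)"
  by (rule span_mod_mult_left[where Bs = "power fA"]) (metis power_Suc span_mod.basis)

lemma central_mult_span_A_powers:
  assumes "z * fA - fA * z \<in> R_fa" "z - fa_const k \<in> I_fa"
  shows "z * fA ^ n \<in> span_mod (power fA)"
  by (rule span_mod_cong[OF central_power_mod_I_fa[OF assms]]) (intro span_mod.scale span_mod.basis)

lemma fB_span_A_powers: "fB \<in> span_mod (power fA)"
proof (rule span_mod_cong)
  show "fB - fa_const (theta b nu 0) * fA ^ 0 \<in> I_fa" using I_fa_B by simp
qed (intro span_mod.scale span_mod.basis)

lemma fB_fA_span_A_powers: "fB * fA \<in> span_mod (power fA)"
proof (rule span_mod_cong)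
  let ?s1 = "theta b nu 1" and ?t0 = "theta a nu 0" and ?p1 = "phi a b c nu 1"
  let ?y = "fa_const ?t0 * fB + fa_const ?s1 * fA ^ 1 - fa_const (?s1 * ?t0) * fA ^ 0 + fa_const ?p1 * fA ^ 0"
  have "fB * fA - ?y = (fB - fa_const ?s1) * (fA - fa_const ?t0) - fa_const ?p1"
    by (simp add: algebra_simps fa_const_mult fa_const_commute[of ?t0 fB])
      (simp only: fa_const_mult[symmetric] mult.commute)
  then show "fB * fA - ?y \<in> I_fa" using I_fa_BA by (simp only:)
  show "?y \<in> span_mod (power fA)"
    by (intro span_mod.add span_mod_diff span_mod.scale span_mod.basis fB_span_A_powers)
qed

text \<open>Eliminating D by [A,B] = 2D, the definition of \<alpha> writes B A A as 2\<alpha> - 2A\<delta> plus words in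
  which B is followed by at most one A. As \<alpha> and \<delta> commute with A modulo the Racah relations
  and are scalars modulo I, this is the induction step.\<close>

lemma fB_fA_power_step:
  assumes IH0: "fB * fA ^ n \<in> span_mod (power fA)" and IH1: "fB * fA ^ Suc n \<in> span_mod (power fA)"
  shows "fB * fA ^ Suc (Suc n) \<in> span_mod (power fA)"
proof -
  let ?P = "fA ^ n :: 'a free_algebra"
  let ?R = "fA * fB - fB * fA - (fD + fD) :: 'a free_algebra"
  let ?S = "(fa_alpha * ?P + fa_alpha * ?P) - fA * (fA * (fB * ?P))
     + (fA * (fB * (fA * ?P)) + fA * (fB * (fA * ?P)))
     - (fA * (fa_delta * ?P) + fA * (fa_delta * ?P)) + (fA * (fA * ?P) + fA * (fA * ?P))
     + (fA * (fB * ?P) + fA * (fB * ?P)) + (fB * (fA * ?P) + fB * (fA * ?P))"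
  have eq: "fB * fA ^ Suc (Suc n) = ?S + (fA * (?R * ?P) - ?R * (fA * ?P))"
    by (simp add: fa_alpha_def fa_delta_def algebra_simps)
  have A_P: "fA * ?P \<in> span_mod (power fA)"
    by (rule fA_mult_span_A_powers[OF span_mod.basis])
  have B_A_P: "fB * (fA * ?P) \<in> span_mod (power fA)" using IH1 by simp
  have S: "?S \<in> span_mod (power fA)"
    by (intro span_mod.add span_mod_diff fA_mult_span_A_powers IH0 A_P B_A_P
        central_mult_span_A_powers[OF R_fa_alpha_A I_fa_alpha]
        central_mult_span_A_powers[OF R_fa_delta_A I_fa_delta])
  have R: "fA * (?R * ?P) - ?R * (fA * ?P) \<in> I_fa"
    by (intro R_fa_subset_I_fa R_fa_diff R_fa_mult_left R_fa_mult_right R_fa_AB)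
  show ?thesis unfolding eq by (rule span_mod.add[OF S span_mod.ideal[OF R]])
qed

lemma fB_fA_power_span: "fB * fA ^ n \<in> span_mod (power fA)"
proof -
  have "fB * fA ^ n \<in> span_mod (power fA) \<and> fB * fA ^ Suc n \<in> span_mod (power fA)"
  proof (induction n)
    case 0
    show ?case using fB_span_A_powers fB_fA_span_A_powers by simp
  next
    case (Suc n)
    then show ?case using fB_fA_power_step by blast
  qed
  then show ?thesis by blast
qed

lemma fC_fA_power_span: "fC * fA ^ n \<in> span_mod (power fA)"
proof -
  have eq: "fC * fA ^ n = fa_delta * fA ^ n - fA * fA ^ n - fB * fA ^ n"
    by (simp add: fa_delta_def algebra_simps)
  show ?thesis unfolding eq
    by (intro span_mod_diff central_mult_span_A_powers[OF R_fa_delta_A I_fa_delta]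
        fA_mult_span_A_powers span_mod.basis fB_fA_power_span)
qed

end

context racah_module
begin

lemma fD_fA_power_span: "fD * fA ^ n \<in> span_mod (power fA)"
proof -
  let ?P = "fA ^ n :: 'a free_algebra"
  have "(fD + fD) * ?P - (fA * (fB * ?P) - fB * (fA * ?P)) = - ((fA * fB - fB * fA - (fD + fD)) * ?P)"
    by (simp add: algebra_simps)
  then have I: "(fD + fD) * ?P - (fA * (fB * ?P) - fB * (fA * ?P)) \<in> I_fa"
    using I_fa_diff[OF I_fa_zero R_fa_subset_I_fa[OF R_fa_mult_right[OF R_fa_AB]]] by simp
  have "fA * (fB * ?P) - fB * (fA * ?P) \<in> span_mod (power fA)"
    using fB_fA_power_span[of "Suc n"]
    by (intro span_mod_diff fA_mult_span_A_powers fB_fA_power_span) simp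
  then have "fa_const (1 / 2) * ((fD + fD) * ?P) \<in> span_mod (power fA)"
    by (rule span_mod.scale[OF span_mod_cong[OF I]])
  moreover have "fa_const (1 / 2) * ((fD + fD) * ?P) = fD * ?P"
  proof -
    have "fa_const (1 / 2) * ((fD + fD) * ?P) = fa_const (1 / 2 + 1 / 2) * (fD * ?P)"
      by (simp only: fa_const_add distrib_left distrib_right)
    also have "\<dots> = fD * ?P"
      using char_ne_2 by (simp add: add_divide_distrib[symmetric] fa_const_one)
    finally show ?thesis .
  qed
  ultimately show ?thesis by simp
qed

lemma span_A_powers_all: "x \<in> span_mod (power fA)"
proof -
  have gen: "fa_gen g * y \<in> span_mod (power fA)" if "y \<in> span_mod (power fA)" for g y
  proof (rule span_mod_mult_left[OF _ that])
    show "fa_gen g * fA ^ j \<in> span_mod (power fA)" for j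
      by (cases g) (simp_all add: fA_mult_span_A_powers[OF span_mod.basis] fB_fA_power_span
          fC_fA_power_span fD_fA_power_span)
  qed
  have word: "fa_word u \<in> span_mod (power fA)" for u
    by (induction u) (simp_all add: fa_word_Cons gen, metis fa_word_Nil power_0 span_mod.basis)
  show ?thesis
    by (subst free_algebra_word_expansion) (intro span_mod_sum span_mod.scale word)
qed

end

context racah_ops
begin

primrec lift_m :: "nat \<Rightarrow> 'a free_algebra" where
  "lift_m 0 = 1"
| "lift_m (Suc j) = (fA - fa_const (theta a nu j)) * lift_m j"

lemma fA_mult_lift_m: "fA * lift_m j \<in> span_mod lift_m"
proof -
  have eq: "fA * lift_m j = lift_m (Suc j) + fa_const (theta a nu j) * lift_m j"
    by (simp add: algebra_simps)
  show ?thesis unfolding eq by (intro span_mod.add span_mod.scale span_mod.basis)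
qed

lemma A_power_span_lift_m: "fA ^ n \<in> span_mod lift_m"
proof (induction n)
  case 0
  show ?case using span_mod.basis[of lift_m 0] by simp
next
  case (Suc n)
  show ?case using span_mod_mult_left[OF fA_mult_lift_m Suc.IH] by simp
qed

end

context racah_module
begin

lemma span_lift_m_all: "x \<in> span_mod lift_m"
  using span_mod_mult_left[OF _ span_A_powers_all, of 1] A_power_span_lift_m by simp

lemma act_lift_m: "act (lift_m j) m0 = unit_vec j"
proof (induction j)
  case 0
  show ?case by (simp add: act_one m0_eq_unit_vec)
next
  case (Suc j)
  show ?case
  proof (rule ext)
    show "act (lift_m (Suc j)) m0 i = unit_vec (Suc j) i" for i
      by (cases i) (simp_all add: act_simps Suc actA_def unit_vec_def)
  qed
qed

lemma act_lift_m_combination: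
  assumes "\<forall>j\<ge>N. cf j = 0"
  shows "act (\<Sum>j<N. fa_const (cf j) * lift_m j) m0 = cf"
proof (rule ext)
  fix i
  have "act (\<Sum>j<N. fa_const (cf j) * lift_m j) m0 i = (\<Sum>j<N. if i = j then cf j else 0)"
    by (simp add: act_sum act_const_mult act_lift_m unit_vec_def if_distrib cong: if_cong)
  also have "\<dots> = cf i" using assms by (cases "i < N") auto
  finally show "act (\<Sum>j<N. fa_const (cf j) * lift_m j) m0 i = cf i" .
qed

lemma lift_m_normal_form:
  "\<exists>N cf. (\<forall>j\<ge>N. cf j = 0) \<and> x - (\<Sum>j<N. fa_const (cf j) * lift_m j) \<in> I_fa \<and> act x m0 = cf"
proof -
  obtain N cf where cf: "\<forall>j\<ge>N. cf j = 0" and x: "x - (\<Sum>j<N. fa_const (cf j) * lift_m j) \<in> I_fa"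
    using span_mod_normal_form[OF span_lift_m_all] by blast
  have "act x m0 = act (\<Sum>j<N. fa_const (cf j) * lift_m j) m0"
    using I_fa_kills_m0[OF x] by (simp add: act_diff fun_eq_iff)
  then show ?thesis
    using cf x act_lift_m_combination[OF cf] by (intro exI[of _ N] exI[of _ cf]) simp
qed

lemma act_m0_eq_iff: "act x m0 = act y m0 \<longleftrightarrow> x - y \<in> I_fa"
proof
  assume eq: "act x m0 = act y m0"
  obtain N cf where cf: "\<forall>j\<ge>N. cf j = 0" "x - (\<Sum>j<N. fa_const (cf j) * lift_m j) \<in> I_fa"
    "act x m0 = cf"
    using lift_m_normal_form by blast
  obtain M cg where cg: "\<forall>j\<ge>M. cg j = 0" "y - (\<Sum>j<M. fa_const (cg j) * lift_m j) \<in> I_fa"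
    "act y m0 = cg"
    using lift_m_normal_form by blast
  have "(\<Sum>j<N. fa_const (cf j) * lift_m j) = (\<Sum>j<M. fa_const (cg j) * lift_m j)"
    using sum_lessThan_extend[OF cf(1), of "max N M"] sum_lessThan_extend[OF cg(1), of "max N M"]
      eq cf(3) cg(3) by simp
  then have "x - y = (x - (\<Sum>j<N. fa_const (cf j) * lift_m j)) - (y - (\<Sum>j<M. fa_const (cg j) * lift_m j))"
    by simp
  then show "x - y \<in> I_fa" using I_fa_diff[OF cf(2) cg(2)] by (simp only:)
next
  assume "x - y \<in> I_fa"
  then have "act (x - y) m0 = (\<lambda>i. 0)" by (rule I_fa_kills_m0)
  then show "act x m0 = act y m0" by (simp add: act_diff fun_eq_iff)
qed

lemma act_m0_surj:
  assumes "v \<in> Mv"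
  shows "\<exists>x. act x m0 = v"
proof -
  obtain N where "\<forall>i\<in>{i. v i \<noteq> 0}. i < N"
    using assms finite_nat_set_iff_bounded unfolding Mv_def by blast
  then have "\<forall>j\<ge>N. v j = 0" by (auto simp: not_less[symmetric])
  then show ?thesis using act_lift_m_combination by blast
qed

end

section \<open>The isomorphism\<close>

context racah_ops
begin

lemma I_lift_uminus: "k \<in> I_lift a b c nu \<Longrightarrow> - k \<in> I_lift a b c nu"
  using left_ideal.mul[OF _ free_alg_const, of k _ "- 1"]
  by (simp add: I_lift_def ncp_mul_const_left fun_Compl_def)

lemma rcoset_eq_iff: "rcoset a b c nu p = rcoset a b c nu q \<longleftrightarrow> p - q \<in> I_lift a b c nu"
proof
  assume "rcoset a b c nu p = rcoset a b c nu q"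
  moreover have "p \<in> rcoset a b c nu p"
    unfolding rcoset_def I_lift_def using left_ideal.zero by force
  ultimately obtain k where "k \<in> I_lift a b c nu" "p = q + k" unfolding rcoset_def by blast
  then show "p - q \<in> I_lift a b c nu" by simp
next
  assume pq: "p - q \<in> I_lift a b c nu"
  have "p + k = q + ((p - q) + k)" "q + k = p + (- (p - q) + k)" for k
    by (simp_all add: algebra_simps)
  then show "rcoset a b c nu p = rcoset a b c nu q"
    unfolding rcoset_def I_lift_def
    using left_ideal.add[OF pq[unfolded I_lift_def]] left_ideal.add[OF I_lift_uminus[OF pq, unfolded I_lift_def]]
    by blast
qed

lemma rquot_eq_range: "rquot a b c nu = range (\<lambda>x. rcoset a b c nu (Rep_free_algebra x))"
  unfolding rquot_def type_definition.Rep_range[OF type_definition_free_algebra, symmetric] image_image ..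

lemma qadd_rcoset:
  "qadd (rcoset a b c nu p) (rcoset a b c nu q) = rcoset a b c nu (p + q)"
proof (intro equalityI subsetI)
  fix s assume "s \<in> qadd (rcoset a b c nu p) (rcoset a b c nu q)"
  then obtain k l where "k \<in> I_lift a b c nu" "l \<in> I_lift a b c nu" "s = (p + k) + (q + l)"
    unfolding qadd_def rcoset_def by blast
  then show "s \<in> rcoset a b c nu (p + q)"
    unfolding rcoset_def I_lift_def
    by (intro CollectI exI[of _ "k + l"]) (simp add: algebra_simps left_ideal.add)
next
  fix s assume "s \<in> rcoset a b c nu (p + q)"
  then obtain k where "k \<in> I_lift a b c nu" "s = (p + k) + (q + 0)"
    unfolding rcoset_def by (auto simp: algebra_simps)
  then show "s \<in> qadd (rcoset a b c nu p) (rcoset a b c nu q)"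
    unfolding qadd_def rcoset_def I_lift_def using left_ideal.zero by blast
qed

lemma qact_rcoset:
  assumes "r \<in> free_alg"
  shows "qact a b c nu r (rcoset a b c nu p) = rcoset a b c nu (ncp_mul r p)"
proof (intro equalityI subsetI)
  fix s assume "s \<in> qact a b c nu r (rcoset a b c nu p)"
  then obtain k l where "k \<in> I_lift a b c nu" "l \<in> I_lift a b c nu" "s = ncp_mul r (p + k) + l"
    unfolding qact_def rcoset_def by blast
  then show "s \<in> rcoset a b c nu (ncp_mul r p)"
    unfolding rcoset_def I_lift_def
    by (intro CollectI exI[of _ "ncp_mul r k + l"])
      (simp add: ncp_mul_add_right add.assoc left_ideal.add left_ideal.mul assms)
next
  fix s assume "s \<in> rcoset a b c nu (ncp_mul r p)"
  then obtain k where "k \<in> I_lift a b c nu" "s = ncp_mul r (p + 0) + k"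
    unfolding rcoset_def by auto
  then show "s \<in> qact a b c nu r (rcoset a b c nu p)"
    unfolding qact_def rcoset_def I_lift_def using left_ideal.zero by blast
qed

definition Phi :: "'a ncp set \<Rightarrow> nat \<Rightarrow> 'a" where
  "Phi X = act (SOME x. X = rcoset a b c nu (Rep_free_algebra x)) m0"

end

context racah_module
begin

lemma rcoset_Rep_eq_iff:
  "rcoset a b c nu (Rep_free_algebra x) = rcoset a b c nu (Rep_free_algebra y) \<longleftrightarrow> x - y \<in> I_fa"
  by (simp add: rcoset_eq_iff I_fa_def minus_free_algebra.rep_eq)

lemma Phi_rcoset: "Phi (rcoset a b c nu (Rep_free_algebra x)) = act x m0"
proof -
  let ?x = "SOME x'. rcoset a b c nu (Rep_free_algebra x) = rcoset a b c nu (Rep_free_algebra x')"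
  have "rcoset a b c nu (Rep_free_algebra x) = rcoset a b c nu (Rep_free_algebra ?x)"
    by (rule someI) (rule refl)
  then have "act x m0 = act ?x m0" by (simp only: rcoset_Rep_eq_iff act_m0_eq_iff)
  then show ?thesis unfolding Phi_def by simp
qed

lemma Phi_racah_hom: "racah_hom a b c nu Phi"
  unfolding racah_hom_def rquot_eq_range
proof (intro conjI ballI)
  fix X assume "X \<in> range (\<lambda>x. rcoset a b c nu (Rep_free_algebra x))"
  then show "Phi X \<in> Mv" by (auto simp: Phi_rcoset act_Mv[OF m0_Mv])
next
  fix X Y assume "X \<in> range (\<lambda>x. rcoset a b c nu (Rep_free_algebra x))"
    "Y \<in> range (\<lambda>x. rcoset a b c nu (Rep_free_algebra x))"
  then show "Phi (qadd X Y) = (\<lambda>i. Phi X i + Phi Y i)"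
    by (auto simp: qadd_rcoset Phi_rcoset act_add plus_free_algebra.rep_eq[symmetric])
next
  fix r :: "'a ncp" and X assume r: "r \<in> free_alg" and "X \<in> range (\<lambda>x. rcoset a b c nu (Rep_free_algebra x))"
  then obtain x where X: "X = rcoset a b c nu (Rep_free_algebra x)" by blast
  have "r = Rep_free_algebra (Abs_free_algebra r)" using r by (simp add: Abs_free_algebra_inverse)
  then show "Phi (qact a b c nu r X) = mact a b c nu r (Phi X)"
    unfolding X qact_rcoset[OF r]
    by (metis Phi_rcoset act_def act_mult times_free_algebra.rep_eq)
qed

lemma Phi_one: "Phi (rcoset a b c nu (ncp_const 1)) = m0"
  using Phi_rcoset[of 1] by (simp add: one_free_algebra.rep_eq act_one)

lemma Phi_bij: "bij_betw Phi (rquot a b c nu) Mv"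
  unfolding bij_betw_def rquot_eq_range
proof
  show "inj_on Phi (range (\<lambda>x. rcoset a b c nu (Rep_free_algebra x)))"
  proof (rule inj_onI)
    fix X Y assume "X \<in> range (\<lambda>x. rcoset a b c nu (Rep_free_algebra x))"
      "Y \<in> range (\<lambda>x. rcoset a b c nu (Rep_free_algebra x))" and eq: "Phi X = Phi Y"
    then obtain x y where xy: "X = rcoset a b c nu (Rep_free_algebra x)"
      "Y = rcoset a b c nu (Rep_free_algebra y)" by blast
    with eq have "x - y \<in> I_fa" by (simp add: Phi_rcoset act_m0_eq_iff)
    with xy show "X = Y" by (simp only: rcoset_Rep_eq_iff)
  qed
  show "Phi ` range (\<lambda>x. rcoset a b c nu (Rep_free_algebra x)) = Mv"
    using act_m0_surj act_Mv[OF m0_Mv] by (auto simp: image_iff Phi_rcoset) metis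
qed

lemma racah_hom_unique:
  assumes hom: "racah_hom a b c nu \<Psi>" and one: "\<Psi> (rcoset a b c nu (ncp_const 1)) = m0"
    and X: "X \<in> rquot a b c nu"
  shows "\<Psi> X = Phi X"
proof -
  obtain x where X: "X = rcoset a b c nu (Rep_free_algebra x)" using X unfolding rquot_eq_range by blast
  have unit: "rcoset a b c nu (ncp_const 1) \<in> rquot a b c nu"
    unfolding rquot_eq_range by (metis rangeI one_free_algebra.rep_eq)
  have "\<Psi> X = \<Psi> (qact a b c nu (Rep_free_algebra x) (rcoset a b c nu (ncp_const 1)))"
    by (simp add: X qact_rcoset Rep_free_algebra ncp_mul_const_right)
  also have "\<dots> = act x m0"
    using hom unit Rep_free_algebra[of x] one unfolding racah_hom_def act_def by simp
  finally show ?thesis by (simp add: X Phi_rcoset)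
qed

end

theorem theorem3p6:
  fixes a b c nu :: "'a::field"
  assumes char_ne_2: "(2::'a) \<noteq> 0"
    and alg_closed: "\<forall>p::'a poly. 0 < degree p \<longrightarrow> (\<exists>x. poly p x = 0)"
  shows "\<exists>\<Phi>. racah_hom a b c nu \<Phi>
              \<and> \<Phi> (rcoset a b c nu (ncp_const 1)) = m0
              \<and> bij_betw \<Phi> (rquot a b c nu) Mv
              \<and> (\<forall>\<Psi>. racah_hom a b c nu \<Psi> \<and> \<Psi> (rcoset a b c nu (ncp_const 1)) = m0
                      \<longrightarrow> (\<forall>X\<in>rquot a b c nu. \<Psi> X = \<Phi> X))"
proof -
  interpret racah_module a b c nu by unfold_locales (rule char_ne_2)
  show ?thesis
    using Phi_racah_hom Phi_one Phi_bij racah_hom_unique by blast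
qed

end
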